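(* Let $H=\operatorname{diag}(\lambda_1,\dots,\lambda_n)$ with $\lambda_1\ge\dots\ge\lambda_{n-p}\ge0>\lambda_{n-p+1}\ge\dots\ge\lambda_n$ for some $1\le p<n$, let $f(x)=\frac12x^THx$, and let $L=\max(\lambda_1,-\lambda_n)$. Let $0<\alpha<1/L$, let $\gamma_k\in[0,1]$ and $\beta_k\in[0,1]$ for $k\ge1$, and generate iterates by choosing $x^1\in\mathbb{R}^n$, setting $x^0=x^1$, and for $k=1,2,\dots$ \[ y^k=x^k+\gamma_k(x^k-x^{k-1}),\qquad x^{k+1}=x^k+\beta_k(x^k-x^{k-1})-\alpha\nabla f(y^k). \] Then for every $i$ with $\lambda_i<0$ and every $k\ge0$, \[ x_i^{k+1}=x_i^0\prod_{m=0}^k(1+b_{i,m}), \] where $b_{i,0}=0$ and, for $k\ge1$, \[ b_{i,k}=(\beta_k+\gamma_k\alpha|\lambda_i|)\Big(1-\frac{1}{1+b_{i,k-1}}\Big)+\alpha|\lambda_i|. \] In addition, if $\gamma_{k+1}\ge\gamma_k$ and $\beta_{k+1}\ge\beta_k$ for all $k$, then $b_{i,k+1}\ge b_{i,k}$ for $k=1,2,\dots$.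
   Context: Here $x_i^k$ denotes the $i$-th component of $x^k$. The iteration is a general accelerated gradient framework: $\gamma_k=\beta_k=0$ gives gradient descent, $\gamma_k=0$ gives heavy-ball, $\gamma_k=\beta_k$ gives Nesterov-type accelerated gradient. *)

theory Defs
  imports Complex_Main
begin

text \<open>Vectors in R^n are functions nat => real, components indexed by 1..n.
  H = diag(lam 1, ..., lam n).\<close>

definition diagH :: "(nat \<Rightarrow> real) \<Rightarrow> nat \<Rightarrow> nat \<Rightarrow> real" where
  "diagH lam i j = (if i = j then lam i else 0)"

definition quad_f :: "nat \<Rightarrow> (nat \<Rightarrow> real) \<Rightarrow> (nat \<Rightarrow> real) \<Rightarrow> real" where
  "quad_f n lam x = (1/2) * (\<Sum>i=1..n. \<Sum>j=1..n. x i * diagH lam i j * x j)"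

text \<open>gradient of f (H symmetric): (grad f(x))_i = (H x)_i\<close>
definition quad_grad :: "nat \<Rightarrow> (nat \<Rightarrow> real) \<Rightarrow> (nat \<Rightarrow> real) \<Rightarrow> nat \<Rightarrow> real" where
  "quad_grad n lam x i = (\<Sum>j=1..n. diagH lam i j * x j)"

fun bseq :: "real \<Rightarrow> (nat \<Rightarrow> real) \<Rightarrow> (nat \<Rightarrow> real) \<Rightarrow> real \<Rightarrow> nat \<Rightarrow> real" where
  "bseq \<alpha> \<beta> \<gamma> l 0 = 0"
| "bseq \<alpha> \<beta> \<gamma> l (Suc k) =
     (\<beta> (Suc k) + \<gamma> (Suc k) * \<alpha> * \<bar>l\<bar>) * (1 - 1 / (1 + bseq \<alpha> \<beta> \<gamma> l k)) + \<alpha> * \<bar>l\<bar>"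

end

theory Submission
  imports Defs
begin

text \<open>On a negative eigendirection the iteration is a scalar second-order linear recursion.
  Writing \<open>x(k+1) = x(k) (1 + b(k))\<close>, the momentum term \<open>x(k) - x(k-1)\<close> equals
  \<open>x(k) (1 - 1/(1 + b(k-1)))\<close>, so the recursion closes in the ratios \<open>b(k)\<close>, which stay
  nonnegative. Since \<open>b \<mapsto> 1 - 1/(1 + b)\<close> is increasing on \<open>[0,\<infinity>)\<close>, nondecreasing
  momentum parameters give nondecreasing ratios.\<close>

lemma quad_grad_diag:
  assumes "i \<in> {1..n}"
  shows "quad_grad n lam v i = lam i * v i"
proof -
  have "quad_grad n lam v i = (\<Sum>j\<in>{1..n}. if i = j then lam i * v i else 0)"
    unfolding quad_grad_def diagH_def by (rule sum.cong) auto
  also have "\<dots> = lam i * v i"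
    using assms by (simp add: sum.delta)
  finally show ?thesis .
qed

lemma one_minus_inverse_nonneg: "0 \<le> (a::real) \<Longrightarrow> 0 \<le> 1 - 1 / (1 + a)"
  by (simp add: field_simps)

lemma one_minus_inverse_mono: "0 \<le> (a::real) \<Longrightarrow> a \<le> b \<Longrightarrow> 1 - 1 / (1 + a) \<le> 1 - 1 / (1 + b)"
  by (simp add: frac_le)

lemma bseq_nonneg:
  assumes "0 \<le> \<alpha>" and "\<And>k. 1 \<le> k \<Longrightarrow> 0 \<le> \<beta> k" and "\<And>k. 1 \<le> k \<Longrightarrow> 0 \<le> \<gamma> k"
  shows "0 \<le> bseq \<alpha> \<beta> \<gamma> l k"
proof (induction k)
  case 0
  then show ?case by simp
next
  case (Suc k)
  have "0 \<le> \<beta> (Suc k) + \<gamma> (Suc k) * \<alpha> * \<bar>l\<bar>"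
    using assms by simp
  with one_minus_inverse_nonneg[OF Suc.IH] assms(1) show ?case
    by simp
qed

lemma bseq_Suc_mono:
  assumes "0 \<le> \<alpha>" and \<beta>_nonneg: "\<And>k. 1 \<le> k \<Longrightarrow> 0 \<le> \<beta> k"
    and \<gamma>_nonneg: "\<And>k. 1 \<le> k \<Longrightarrow> 0 \<le> \<gamma> k"
    and \<beta>_mono: "\<And>k. 1 \<le> k \<Longrightarrow> \<beta> k \<le> \<beta> (Suc k)"
    and \<gamma>_mono: "\<And>k. 1 \<le> k \<Longrightarrow> \<gamma> k \<le> \<gamma> (Suc k)"
    and "1 \<le> k"
  shows "bseq \<alpha> \<beta> \<gamma> l k \<le> bseq \<alpha> \<beta> \<gamma> l (Suc k)"
  using \<open>1 \<le> k\<close>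
proof (induction k rule: dec_induct)
  case base
  have "0 \<le> \<beta> 2 + \<gamma> 2 * \<alpha> * \<bar>l\<bar>"
    using assms by simp
  with one_minus_inverse_nonneg[of "\<alpha> * \<bar>l\<bar>"] \<open>0 \<le> \<alpha>\<close> show ?case
    by (simp add: numeral_2_eq_2)
next
  case (step k)
  let ?b = "bseq \<alpha> \<beta> \<gamma> l" and ?c = "\<lambda>k. \<beta> k + \<gamma> k * \<alpha> * \<bar>l\<bar>"
  have b_nonneg: "0 \<le> ?b k"
    using bseq_nonneg assms by blast
  have "?c (Suc k) \<le> ?c (Suc (Suc k))"
    using \<beta>_mono[of "Suc k"] \<gamma>_mono[of "Suc k"] \<open>0 \<le> \<alpha>\<close> by (simp add: add_mono mult_right_mono)
  moreover have "0 \<le> ?c (Suc k)"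
    using assms by simp
  ultimately have "?c (Suc k) * (1 - 1 / (1 + ?b k)) \<le> ?c (Suc (Suc k)) * (1 - 1 / (1 + ?b (Suc k)))"
    using mult_mono one_minus_inverse_mono[OF b_nonneg step.IH] one_minus_inverse_nonneg[OF b_nonneg]
    by (meson order_trans)
  then show ?case
    by simp
qed

lemma momentum_recursion_ratio:
  fixes z :: "nat \<Rightarrow> real"
  assumes "l \<le> 0" and "0 \<le> \<alpha>"
    and "\<And>k. 1 \<le> k \<Longrightarrow> 0 \<le> \<beta> k" and "\<And>k. 1 \<le> k \<Longrightarrow> 0 \<le> \<gamma> k"
    and z0: "z 0 = z 1"
    and z_rec: "\<And>k. 1 \<le> k \<Longrightarrow>
      z (Suc k) = z k + \<beta> k * (z k - z (k - 1)) - \<alpha> * (l * (z k + \<gamma> k * (z k - z (k - 1))))"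
  shows "z (Suc k) = z k * (1 + bseq \<alpha> \<beta> \<gamma> l k)"
proof (induction k)
  case 0
  then show ?case using z0 by simp
next
  case (Suc k)
  let ?b = "bseq \<alpha> \<beta> \<gamma> l"
  have "0 < 1 + ?b k"
    using bseq_nonneg[of \<alpha> \<beta> \<gamma> l k] assms by fastforce
  with Suc.IH have momentum: "z (Suc k) - z k = z (Suc k) * (1 - 1 / (1 + ?b k))"
    by (simp add: field_simps)
  have "z (Suc (Suc k)) = z (Suc k) + \<beta> (Suc k) * (z (Suc k) - z k)
      - \<alpha> * (l * (z (Suc k) + \<gamma> (Suc k) * (z (Suc k) - z k)))"
    using z_rec[of "Suc k"] by simp
  also have "\<dots> = z (Suc k) * (1 + ?b (Suc k))"
    unfolding momentum using \<open>l \<le> 0\<close> by (simp add: algebra_simps)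
  finally show ?case .
qed

lemma prod_of_ratio_step:
  fixes z :: "nat \<Rightarrow> real"
  assumes "\<And>k. z (Suc k) = z k * (1 + b k)"
  shows "z (k + 1) = z 0 * (\<Prod>m=0..k. 1 + b m)"
  by (induction k) (simp_all add: assms prod.atLeast0_atMost_Suc)

theorem theorem4p1:
  fixes n p :: nat and lam :: "nat \<Rightarrow> real" and \<alpha> L :: real
    and \<beta> \<gamma> :: "nat \<Rightarrow> real" and x y :: "nat \<Rightarrow> nat \<Rightarrow> real"
  assumes hp: "1 \<le> p" "p < n"
    and sorted: "\<And>i j. 1 \<le> i \<Longrightarrow> i \<le> j \<Longrightarrow> j \<le> n \<Longrightarrow> lam j \<le> lam i"
    and nonneg: "lam (n - p) \<ge> 0"
    and neg: "lam (n - p + 1) < 0"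
    and L_def: "L = max (lam 1) (- lam n)"
    and \<alpha>pos: "0 < \<alpha>" and \<alpha>L: "\<alpha> < 1 / L"
    and \<gamma>01: "\<And>k. 1 \<le> k \<Longrightarrow> 0 \<le> \<gamma> k \<and> \<gamma> k \<le> 1"
    and \<beta>01: "\<And>k. 1 \<le> k \<Longrightarrow> 0 \<le> \<beta> k \<and> \<beta> k \<le> 1"
    and x0: "x 0 = x 1"
    and yk: "\<And>k i. 1 \<le> k \<Longrightarrow> y k i = x k i + \<gamma> k * (x k i - x (k - 1) i)"
    and xk: "\<And>k i. 1 \<le> k \<Longrightarrow>
              x (k + 1) i = x k i + \<beta> k * (x k i - x (k - 1) i) - \<alpha> * quad_grad n lam (y k) i"
  shows "(\<forall>i\<in>{1..n}. lam i < 0 \<longrightarrow>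
            (\<forall>k. x (k + 1) i = x 0 i * (\<Prod>m=0..k. 1 + bseq \<alpha> \<beta> \<gamma> (lam i) m)))
       \<and> ((\<forall>k\<ge>1. \<gamma> (k + 1) \<ge> \<gamma> k \<and> \<beta> (k + 1) \<ge> \<beta> k) \<longrightarrow>
           (\<forall>i\<in>{1..n}. lam i < 0 \<longrightarrow>
              (\<forall>k\<ge>1. bseq \<alpha> \<beta> \<gamma> (lam i) (k + 1) \<ge> bseq \<alpha> \<beta> \<gamma> (lam i) k)))"
proof (intro conjI impI ballI allI)
  fix i k
  assume i: "i \<in> {1..n}" and "lam i < 0"
  have "x (Suc m) i = x m i * (1 + bseq \<alpha> \<beta> \<gamma> (lam i) m)" for m
    using momentum_recursion_ratio[where z = "\<lambda>k. x k i" and l = "lam i"] \<open>lam i < 0\<close> \<alpha>pos \<beta>01 \<gamma>01 x0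
      xk yk quad_grad_diag[OF i]
    by simp
  then show "x (k + 1) i = x 0 i * (\<Prod>m=0..k. 1 + bseq \<alpha> \<beta> \<gamma> (lam i) m)"
    by (rule prod_of_ratio_step)
next
  fix i k :: nat
  assume "\<forall>k\<ge>1. \<gamma> (k + 1) \<ge> \<gamma> k \<and> \<beta> (k + 1) \<ge> \<beta> k" and "1 \<le> k"
  then show "bseq \<alpha> \<beta> \<gamma> (lam i) (k + 1) \<ge> bseq \<alpha> \<beta> \<gamma> (lam i) k"
    using bseq_Suc_mono[of \<alpha> \<beta> \<gamma> k "lam i"] \<alpha>pos \<beta>01 \<gamma>01 by simp
qed

end
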